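(* Let $n,m\ge1$, $a^{(1)},b^{(1)}\in\mathbb{R}^n$, $a^{(2)},b^{(2)}\in\mathbb{R}^m$, and for $z\in\mathbb{R}$ put $X(z)=a^{(1)}+b^{(1)}z$, $Y(z)=a^{(2)}+b^{(2)}z$. For $i\in[n],j\in[m]$ and $M\in\mathcal{M}_{i,j}$ let $L_{i,j}(M,z)=\sum_{k\le i,\,l\le j}M_{kl}\,(X_k(z)-Y_l(z))^2$, $\hat L_{i,j}(z)=\min_{M\in\mathcal{M}_{i,j}}L_{i,j}(M,z)$, and $$\hat{\mathcal{M}}_{i,j}=\{M\in\mathcal{M}_{i,j} : \exists z\in\mathbb{R}\ \text{with}\ \hat L_{i,j}(z)=L_{i,j}(M,z)\},$$ with the conventions $\hat{\mathcal{M}}_{0,0}=\{\text{the empty }0\times0\text{ matrix}\}$ and $\hat{\mathcal{M}}_{i,j}=\emptyset$ if exactly one of $i,j$ is $0$. Define $$\tilde{\mathcal{M}}_{i,j}=\Big\{\mathrm{vstack}\big(\hat M,(0,\dots,0,1)\big):\hat M\in\hat{\mathcal{M}}_{i-1,j}\Big\}\cup\Big\{\mathrm{hstack}\big(\hat M,(0,\dots,0,1)^\top\big):\hat M\in\hat{\mathcal{M}}_{i,j-1}\Big\}\cup\Big\{\begin{pmatrix}\hat M&0\\0&1\end{pmatrix}:\hat M\in\hat{\mathcal{M}}_{i-1,j-1}\Big\},$$ all resulting matrices being $i\times j$. Then for every $i\in[n],j\in[m]$, $$\hat{\mathcal{M}}_{i,j}=\Big\{M\in\tilde{\mathcal{M}}_{i,j}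 : \exists z\in\mathbb{R}\ \text{with}\ L_{i,j}(M,z)=\min_{M'\in\tilde{\mathcal{M}}_{i,j}}L_{i,j}(M',z)\Big\},$$ i.e. $\hat{\mathcal{M}}_{i,j}$ is the set of matrices in $\tilde{\mathcal{M}}_{i,j}$ that minimize $L_{i,j}(\cdot,z)$ over $\tilde{\mathcal{M}}_{i,j}$ for some $z\in\mathbb{R}$.
   Context: For $i,j\ge1$, $\mathcal{M}_{i,j}\subset\{0,1\}^{i\times j}$ is the set of binary alignment matrices: matrices whose set of entries equal to $1$ is exactly the set of cells of a warping path $(1,1)=(i_1,j_1),\dots,(i_K,j_K)=(i,j)$ with each step in $\{(1,0),(0,1),(1,1)\}$. $\mathrm{vstack}(A,r)$ appends the row $r$ (of length $j$) below an $(i-1)\times j$ matrix $A$; $\mathrm{hstack}(A,c)$ appends the column $c$ (of length $i$) to the right of an $i\times(j-1)$ matrix $A$; $\begin{pmatrix}\hat M&0\\0&1\end{pmatrix}$ denotes the $i\times j$ matrix obtained from the $(i-1)\times(j-1)$ matrix $\hat M$ by adding a zero last row and zero last column except for entry $(i,j)$ equal to $1$. *)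

theory Defs
  imports Complex_Main
begin

text \<open>An i x j real matrix is represented as a function nat => nat => real, entry (k,l)
  for 1 <= k <= i, 1 <= l <= j (1-based indices); entries outside this range are 0.
  The empty 0 x 0 matrix is the constant zero function.\<close>

type_synonym mat = "nat \<Rightarrow> nat \<Rightarrow> real"

definition warping_path :: "nat \<Rightarrow> nat \<Rightarrow> (nat \<times> nat) list \<Rightarrow> bool" where
  "warping_path i j ps \<longleftrightarrow> ps \<noteq> [] \<and> hd ps = (1,1) \<and> last ps = (i,j) \<and>
     (\<forall>t. Suc t < length ps \<longrightarrow>
        (let (a,b) = ps ! t; (c,d) = ps ! Suc t in
          (c,d) = (a+1,b) \<or> (c,d) = (a,b+1) \<or> (c,d) = (a+1,b+1)))"

definition path_matrix :: "(nat \<times> nat) list \<Rightarrow> mat" where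
  "path_matrix ps = (\<lambda>k l. if (k,l) \<in> set ps then 1 else 0)"

definition align_mats :: "nat \<Rightarrow> nat \<Rightarrow> mat set" where
  "align_mats i j = {M. \<exists>ps. warping_path i j ps \<and> M = path_matrix ps}"

definition vstack :: "nat \<Rightarrow> nat \<Rightarrow> mat \<Rightarrow> (nat \<Rightarrow> real) \<Rightarrow> mat" where
  "vstack i j A r = (\<lambda>k l. if 1 \<le> k \<and> k \<le> i \<and> 1 \<le> l \<and> l \<le> j
        then (if k = i then r l else A k l) else 0)"

definition hstack :: "nat \<Rightarrow> nat \<Rightarrow> mat \<Rightarrow> (nat \<Rightarrow> real) \<Rightarrow> mat" where
  "hstack i j A c = (\<lambda>k l. if 1 \<le> k \<and> k \<le> i \<and> 1 \<le> l \<and> l \<le> j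
        then (if l = j then c k else A k l) else 0)"

definition diag_ext :: "nat \<Rightarrow> nat \<Rightarrow> mat \<Rightarrow> mat" where
  "diag_ext i j A = (\<lambda>k l. if 1 \<le> k \<and> k \<le> i \<and> 1 \<le> l \<and> l \<le> j
        then (if k = i \<and> l = j then 1 else if k < i \<and> l < j then A k l else 0) else 0)"

definition last_unit :: "nat \<Rightarrow> nat \<Rightarrow> real" where
  "last_unit j = (\<lambda>l. if l = j then 1 else 0)"

definition Lcost :: "(nat \<Rightarrow> real) \<Rightarrow> (nat \<Rightarrow> real) \<Rightarrow> (nat \<Rightarrow> real) \<Rightarrow> (nat \<Rightarrow> real)
    \<Rightarrow> nat \<Rightarrow> nat \<Rightarrow> mat \<Rightarrow> real \<Rightarrow> real" where
  "Lcost a1 b1 a2 b2 i j M z =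
     (\<Sum>k=1..i. \<Sum>l=1..j. M k l * ((a1 k + b1 k * z) - (a2 l + b2 l * z))\<^sup>2)"

definition Lhat :: "(nat \<Rightarrow> real) \<Rightarrow> (nat \<Rightarrow> real) \<Rightarrow> (nat \<Rightarrow> real) \<Rightarrow> (nat \<Rightarrow> real)
    \<Rightarrow> nat \<Rightarrow> nat \<Rightarrow> real \<Rightarrow> real" where
  "Lhat a1 b1 a2 b2 i j z = Min ((\<lambda>M. Lcost a1 b1 a2 b2 i j M z) ` align_mats i j)"

definition Mhat :: "(nat \<Rightarrow> real) \<Rightarrow> (nat \<Rightarrow> real) \<Rightarrow> (nat \<Rightarrow> real) \<Rightarrow> (nat \<Rightarrow> real)
    \<Rightarrow> nat \<Rightarrow> nat \<Rightarrow> mat set" where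
  "Mhat a1 b1 a2 b2 i j =
     (if i = 0 \<and> j = 0 then {(\<lambda>_ _. 0)}
      else if i = 0 \<or> j = 0 then {}
      else {M \<in> align_mats i j. \<exists>z. Lhat a1 b1 a2 b2 i j z = Lcost a1 b1 a2 b2 i j M z})"

definition Mtilde :: "(nat \<Rightarrow> real) \<Rightarrow> (nat \<Rightarrow> real) \<Rightarrow> (nat \<Rightarrow> real) \<Rightarrow> (nat \<Rightarrow> real)
    \<Rightarrow> nat \<Rightarrow> nat \<Rightarrow> mat set" where
  "Mtilde a1 b1 a2 b2 i j =
      (\<lambda>A. vstack i j A (last_unit j)) ` Mhat a1 b1 a2 b2 (i - 1) j
    \<union> (\<lambda>A. hstack i j A (last_unit i)) ` Mhat a1 b1 a2 b2 i (j - 1)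
    \<union> (\<lambda>A. diag_ext i j A) ` Mhat a1 b1 a2 b2 (i - 1) (j - 1)"

end

theory Submission
  imports Defs
begin

text \<open>Bellman's principle for dynamic time warping. A warping path to (i,j) with at least two
  cells is a path to (c,d) \<in> {(i-1,j), (i,j-1), (i-1,j-1)} followed by the cell (i,j), and on
  the matrix side this is exactly vstack, hstack or the block extension. The cost of the extended
  matrix is the cost of the prefix plus (X_i(z) - Y_j(z))^2, a constant independent of the prefix,
  so the prefix of a matrix that is optimal at z is optimal at z for (c,d). Hence every minimiser
  of L_{i,j}(-,z) over M_{i,j} lies in the subset M~_{i,j}, and restricting the minimisation to a
  subset that still contains all minimisers does not change the minimisers.\<close>

lemma Min_pullback_shift:
  fixes f :: "'a \<Rightarrow> 'c::linordered_ab_group_add"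
  assumes "finite S" "finite T" "A \<in> S" "E ` S \<subseteq> T"
    and "\<And>B. B \<in> S \<Longrightarrow> f (E B) = g B + \<kappa>"
    and "f (E A) = Min (f ` T)"
  shows "g A = Min (g ` S)"
proof (rule Min_eqI[symmetric])
  fix y assume "y \<in> g ` S"
  then obtain B where "B \<in> S" "y = g B" by blast
  then have "f (E A) \<le> f (E B)" using assms(2,4,6) by auto
  then show "g A \<le> y" using assms(3,5) \<open>B \<in> S\<close> \<open>y = g B\<close> by simp
qed (use assms in auto)

lemma Min_image_subset_eq:
  fixes f :: "'a \<Rightarrow> 'c::linorder"
  assumes "finite S" "T \<subseteq> S" "M \<in> T" "Min (f ` S) = f M"
  shows "Min (f ` T) = Min (f ` S)"
proof (rule antisym)
  show "Min (f ` T) \<le> Min (f ` S)"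
    using assms finite_subset by (metis Min_le finite_imageI imageI)
  show "Min (f ` S) \<le> Min (f ` T)"
    using assms by (intro Min_antimono) auto
qed

lemma minimizers_restrict_to_subset:
  fixes f :: "'p \<Rightarrow> 'a \<Rightarrow> 'c::linorder"
  assumes "finite S" "T \<subseteq> S"
    and "\<And>z M. M \<in> S \<Longrightarrow> Min (f z ` S) = f z M \<Longrightarrow> M \<in> T"
  shows "{M \<in> S. \<exists>z. Min (f z ` S) = f z M} = {M \<in> T. \<exists>z. f z M = Min (f z ` T)}"
proof (intro set_eqI iffI)
  fix M assume "M \<in> {M \<in> S. \<exists>z. Min (f z ` S) = f z M}"
  then obtain z where M: "M \<in> S" "Min (f z ` S) = f z M" by blast
  then have "M \<in> T" using assms(3) by blast
  moreover have "Min (f z ` T) = Min (f z ` S)"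
    using Min_image_subset_eq[OF assms(1,2) \<open>M \<in> T\<close> M(2)] .
  ultimately show "M \<in> {M \<in> T. \<exists>z. f z M = Min (f z ` T)}"
    using M(2) by (auto intro!: exI[of _ z])
next
  fix M assume "M \<in> {M \<in> T. \<exists>z. f z M = Min (f z ` T)}"
  then obtain z where M: "M \<in> T" "f z M = Min (f z ` T)" by blast
  obtain M' where M': "M' \<in> S" "Min (f z ` S) = f z M'"
    using Min_in[of "f z ` S"] assms(1,2) M(1) by fastforce
  then have "M' \<in> T" using assms(3) by blast
  then have "Min (f z ` T) = Min (f z ` S)"
    using Min_image_subset_eq[OF assms(1,2) _ M'(2)] by blast
  then show "M \<in> {M \<in> S. \<exists>z. Min (f z ` S) = f z M}"
    using M assms(2) by (auto intro!: exI[of _ z])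
qed

definition warp_step :: "nat \<times> nat \<Rightarrow> nat \<times> nat \<Rightarrow> bool" where
  "warp_step p q \<longleftrightarrow> q = (fst p + 1, snd p) \<or> q = (fst p, snd p + 1) \<or> q = (fst p + 1, snd p + 1)"

lemma warping_path_iff:
  "warping_path i j ps \<longleftrightarrow> ps \<noteq> [] \<and> hd ps = (1,1) \<and> last ps = (i,j) \<and>
     (\<forall>t. Suc t < length ps \<longrightarrow> warp_step (ps ! t) (ps ! Suc t))"
proof -
  have "(let (a,b) = p; (c,d) = q in (c,d) = (a+1,b) \<or> (c,d) = (a,b+1) \<or> (c,d) = (a+1,b+1))
      = warp_step p q" for p q :: "nat \<times> nat"
    by (cases p; cases q) (simp add: warp_step_def)
  then show ?thesis unfolding warping_path_def by (simp only:)
qed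

lemma warping_path_single: "warping_path i j [p] \<longleftrightarrow> p = (1,1) \<and> i = 1 \<and> j = 1"
  unfolding warping_path_iff by auto

lemma warping_path_snoc:
  assumes "xs \<noteq> []"
  shows "warping_path i j (xs @ [p]) \<longleftrightarrow>
    p = (i,j) \<and> warping_path (fst (last xs)) (snd (last xs)) xs \<and> warp_step (last xs) p"
proof -
  have "(\<forall>t. Suc t < length (xs @ [p]) \<longrightarrow> warp_step ((xs @ [p]) ! t) ((xs @ [p]) ! Suc t))
      \<longleftrightarrow> (\<forall>t. Suc t < length xs \<longrightarrow> warp_step (xs ! t) (xs ! Suc t)) \<and> warp_step (last xs) p"
  proof -
    have len: "Suc t < length (xs @ [p]) \<longleftrightarrow> Suc t < length xs \<or> t = length xs - 1" for t
      using assms by (cases xs) auto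
    have last: "(xs @ [p]) ! (length xs - 1) = last xs" "(xs @ [p]) ! Suc (length xs - 1) = p"
      using assms by (auto simp: nth_append last_conv_nth)
    have "(\<forall>t. Suc t < length (xs @ [p]) \<longrightarrow> warp_step ((xs @ [p]) ! t) ((xs @ [p]) ! Suc t))
      \<longleftrightarrow> (\<forall>t. Suc t < length xs \<longrightarrow> warp_step ((xs @ [p]) ! t) ((xs @ [p]) ! Suc t))
          \<and> warp_step ((xs @ [p]) ! (length xs - 1)) ((xs @ [p]) ! Suc (length xs - 1))"
      unfolding len by blast
    then show ?thesis unfolding last by (simp add: nth_append)
  qed
  then show ?thesis
    using assms unfolding warping_path_iff by (auto simp: hd_append)
qed

lemma warping_path_cases:
  assumes "warping_path i j ps"
  obtains (single) "ps = [(1,1)]" "i = 1" "j = 1"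
  | (snoc) xs c d where "ps = xs @ [(i,j)]" "warping_path c d xs" "warp_step (c,d) (i,j)"
proof (cases ps rule: rev_exhaust)
  case Nil
  then show ?thesis using assms by (simp add: warping_path_iff)
next
  case (snoc xs p)
  show ?thesis
  proof (cases "xs = []")
    case True
    then show ?thesis using that(1) assms snoc by (simp add: warping_path_single)
  next
    case False
    then show ?thesis
      using that(2)[of xs "fst (last xs)" "snd (last xs)"] assms snoc warping_path_snoc by auto
  qed
qed

lemma warping_path_set:
  "warping_path i j ps \<Longrightarrow> set ps \<subseteq> {1..i} \<times> {1..j}"
proof (induction ps arbitrary: i j rule: rev_induct)
  case Nil
  then show ?case by (simp add: warping_path_iff)
next
  case (snoc p xs)
  show ?case
  proof (cases "xs = []")
    case True
    then show ?thesis using snoc.prems by (simp add: warping_path_single)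
  next
    case False
    then have "p = (i,j)" and xs: "warping_path (fst (last xs)) (snd (last xs)) xs"
      and "warp_step (last xs) p"
      using snoc.prems warping_path_snoc by blast+
    moreover have "last xs \<in> {1..fst (last xs)} \<times> {1..snd (last xs)}"
      using snoc.IH[OF xs] False by auto
    ultimately show ?thesis using snoc.IH[OF xs] unfolding warp_step_def by force
  qed
qed

lemma warping_path_dims: "warping_path i j ps \<Longrightarrow> 1 \<le> i \<and> 1 \<le> j"
  using warping_path_set[of i j ps] by (auto simp: warping_path_iff dest!: last_in_set)

lemma align_mats_dims: "M \<in> align_mats i j \<Longrightarrow> 1 \<le> i \<and> 1 \<le> j"
  unfolding align_mats_def using warping_path_dims by blast

lemma finite_align_mats: "finite (align_mats i j)"
proof (rule finite_subset)
  show "align_mats i j \<subseteq> (\<lambda>S k l. if (k,l) \<in> S then 1 else 0) ` Pow ({1..i} \<times> {1..j})"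
  proof
    fix M assume "M \<in> align_mats i j"
    then obtain ps where "warping_path i j ps" "M = path_matrix ps" unfolding align_mats_def by blast
    then show "M \<in> (\<lambda>S k l. if (k,l) \<in> S then 1 else 0) ` Pow ({1..i} \<times> {1..j})"
      using warping_path_set unfolding path_matrix_def by blast
  qed
qed simp

lemma path_matrix_single: "path_matrix [(1,1)] = diag_ext 1 1 (\<lambda>_ _. 0)"
  unfolding path_matrix_def diag_ext_def by (intro ext) auto

lemma path_matrix_snoc_vstack:
  assumes "warping_path c j xs"
  shows "path_matrix (xs @ [(Suc c, j)]) = vstack (Suc c) j (path_matrix xs) (last_unit j)"
  using warping_path_set[OF assms] warping_path_dims[OF assms]
  unfolding path_matrix_def vstack_def last_unit_def by (intro ext) auto

lemma path_matrix_snoc_hstack: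
  assumes "warping_path i d xs"
  shows "path_matrix (xs @ [(i, Suc d)]) = hstack i (Suc d) (path_matrix xs) (last_unit i)"
  using warping_path_set[OF assms] warping_path_dims[OF assms]
  unfolding path_matrix_def hstack_def last_unit_def by (intro ext) auto

lemma path_matrix_snoc_diag_ext:
  assumes "warping_path c d xs"
  shows "path_matrix (xs @ [(Suc c, Suc d)]) = diag_ext (Suc c) (Suc d) (path_matrix xs)"
  using warping_path_set[OF assms]
  unfolding path_matrix_def diag_ext_def by (intro ext) auto

lemma path_matrix_snoc_in_align_mats:
  assumes "warping_path c d xs" "warp_step (c,d) (i,j)"
  shows "path_matrix (xs @ [(i,j)]) \<in> align_mats i j"
proof -
  have "xs \<noteq> []" "last xs = (c,d)" using assms(1) by (auto simp: warping_path_iff)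
  then have "warping_path i j (xs @ [(i,j)])" using assms by (simp add: warping_path_snoc)
  then show ?thesis unfolding align_mats_def by blast
qed

lemma vstack_in_align_mats:
  "A \<in> align_mats c j \<Longrightarrow> vstack (Suc c) j A (last_unit j) \<in> align_mats (Suc c) j"
proof -
  assume "A \<in> align_mats c j"
  then obtain xs where "warping_path c j xs" "A = path_matrix xs" unfolding align_mats_def by blast
  then show ?thesis using path_matrix_snoc_in_align_mats[of c j xs "Suc c" j]
    by (simp add: path_matrix_snoc_vstack warp_step_def)
qed

lemma hstack_in_align_mats:
  "A \<in> align_mats i d \<Longrightarrow> hstack i (Suc d) A (last_unit i) \<in> align_mats i (Suc d)"
proof -
  assume "A \<in> align_mats i d"
  then obtain xs where "warping_path i d xs" "A = path_matrix xs" unfolding align_mats_def by blast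
  then show ?thesis using path_matrix_snoc_in_align_mats[of i d xs i "Suc d"]
    by (simp add: path_matrix_snoc_hstack warp_step_def)
qed

lemma diag_ext_in_align_mats:
  "A \<in> align_mats c d \<Longrightarrow> diag_ext (Suc c) (Suc d) A \<in> align_mats (Suc c) (Suc d)"
proof -
  assume "A \<in> align_mats c d"
  then obtain xs where "warping_path c d xs" "A = path_matrix xs" unfolding align_mats_def by blast
  then show ?thesis using path_matrix_snoc_in_align_mats[of c d xs "Suc c" "Suc d"]
    by (simp add: path_matrix_snoc_diag_ext warp_step_def)
qed

lemma diag_ext_zero_in_align_mats: "diag_ext 1 1 (\<lambda>_ _. 0) \<in> align_mats 1 1"
proof -
  have "warping_path 1 1 [(1,1)]" by (simp add: warping_path_single)
  then show ?thesis unfolding align_mats_def path_matrix_single[symmetric] by blast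
qed

lemma align_mats_cases:
  assumes "M \<in> align_mats i j"
  obtains (single) "i = 1" "j = 1" "M = diag_ext 1 1 (\<lambda>_ _. 0)"
  | (vert) c A where "i = Suc c" "A \<in> align_mats c j" "M = vstack i j A (last_unit j)"
  | (horiz) d A where "j = Suc d" "A \<in> align_mats i d" "M = hstack i j A (last_unit i)"
  | (diag) c d A where "i = Suc c" "j = Suc d" "A \<in> align_mats c d" "M = diag_ext i j A"
proof -
  obtain ps where ps: "warping_path i j ps" "M = path_matrix ps"
    using assms unfolding align_mats_def by blast
  from ps(1) show thesis
  proof (cases rule: warping_path_cases)
    case single
    then show ?thesis using that(1) ps(2) path_matrix_single by simp
  next
    case (snoc xs c d)
    have A: "path_matrix xs \<in> align_mats c d" using snoc(2) unfolding align_mats_def by blast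
    from snoc(3) consider "i = Suc c" "j = d" | "i = c" "j = Suc d" | "i = Suc c" "j = Suc d"
      unfolding warp_step_def by auto
    then show ?thesis
    proof cases
      case 1
      then show ?thesis using vert[of c "path_matrix xs"] A snoc ps(2)
        by (simp add: path_matrix_snoc_vstack)
    next
      case 2
      then show ?thesis using horiz[of d "path_matrix xs"] A snoc ps(2)
        by (simp add: path_matrix_snoc_hstack)
    next
      case 3
      then show ?thesis using diag[of c d "path_matrix xs"] A snoc ps(2)
        by (simp add: path_matrix_snoc_diag_ext)
    qed
  qed
qed

definition weighted_sum :: "(nat \<Rightarrow> nat \<Rightarrow> real) \<Rightarrow> nat \<Rightarrow> nat \<Rightarrow> mat \<Rightarrow> real" where
  "weighted_sum C i j M = (\<Sum>k=1..i. \<Sum>l=1..j. M k l * C k l)"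

lemma Lcost_eq_weighted_sum:
  "Lcost a1 b1 a2 b2 i j M z =
     weighted_sum (\<lambda>k l. ((a1 k + b1 k * z) - (a2 l + b2 l * z))\<^sup>2) i j M"
  unfolding Lcost_def weighted_sum_def ..

lemma weighted_sum_vstack:
  assumes "1 \<le> j"
  shows "weighted_sum C (Suc c) j (vstack (Suc c) j A (last_unit j)) = weighted_sum C c j A + C (Suc c) j"
proof -
  have "(\<Sum>l=1..j. vstack (Suc c) j A (last_unit j) (Suc c) l * C (Suc c) l)
      = (\<Sum>l=1..j. if l = j then C (Suc c) l else 0)"
    by (rule sum.cong) (auto simp: vstack_def last_unit_def)
  moreover have "(\<Sum>k=1..c. \<Sum>l=1..j. vstack (Suc c) j A (last_unit j) k l * C k l)
      = (\<Sum>k=1..c. \<Sum>l=1..j. A k l * C k l)"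
    by (intro sum.cong refl) (auto simp: vstack_def)
  ultimately show ?thesis using assms by (simp add: weighted_sum_def)
qed

lemma weighted_sum_hstack:
  assumes "1 \<le> i"
  shows "weighted_sum C i (Suc d) (hstack i (Suc d) A (last_unit i)) = weighted_sum C i d A + C i (Suc d)"
proof -
  have "(\<Sum>k=1..i. \<Sum>l=1..Suc d. hstack i (Suc d) A (last_unit i) k l * C k l)
      = (\<Sum>k=1..i. (\<Sum>l=1..d. A k l * C k l) + (if k = i then C k (Suc d) else 0))"
    by (intro sum.cong refl) (auto simp: hstack_def last_unit_def intro!: sum.cong)
  then show ?thesis using assms by (simp add: weighted_sum_def sum.distrib)
qed

lemma weighted_sum_diag_ext:
  "weighted_sum C (Suc c) (Suc d) (diag_ext (Suc c) (Suc d) A) = weighted_sum C c d A + C (Suc c) (Suc d)"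
proof -
  have "(\<Sum>l=1..d. diag_ext (Suc c) (Suc d) A (Suc c) l * C (Suc c) l) = 0"
    by (rule sum.neutral) (auto simp: diag_ext_def)
  moreover have "(\<Sum>k=1..c. \<Sum>l=1..Suc d. diag_ext (Suc c) (Suc d) A k l * C k l)
      = (\<Sum>k=1..c. \<Sum>l=1..d. A k l * C k l)"
    by (rule sum.cong[OF refl]) (auto simp: diag_ext_def intro!: sum.cong)
  ultimately show ?thesis by (simp add: weighted_sum_def diag_ext_def)
qed

lemma Mhat_cases:
  "A \<in> Mhat a1 b1 a2 b2 i j \<Longrightarrow> (i = 0 \<and> j = 0 \<and> A = (\<lambda>_ _. 0)) \<or> A \<in> align_mats i j"
  unfolding Mhat_def by (auto split: if_splits)

lemma Mtilde_subset_align_mats: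
  assumes "1 \<le> i" "1 \<le> j"
  shows "Mtilde a1 b1 a2 b2 i j \<subseteq> align_mats i j"
proof
  fix M assume "M \<in> Mtilde a1 b1 a2 b2 i j"
  then consider (vert) A where "A \<in> Mhat a1 b1 a2 b2 (i-1) j" "M = vstack i j A (last_unit j)"
    | (horiz) A where "A \<in> Mhat a1 b1 a2 b2 i (j-1)" "M = hstack i j A (last_unit i)"
    | (diag) A where "A \<in> Mhat a1 b1 a2 b2 (i-1) (j-1)" "M = diag_ext i j A"
    unfolding Mtilde_def by blast
  then show "M \<in> align_mats i j"
  proof cases
    case vert
    then show ?thesis using Mhat_cases vstack_in_align_mats[of A "i-1" j] assms by fastforce
  next
    case horiz
    then show ?thesis using Mhat_cases hstack_in_align_mats[of A i "j-1"] assms by fastforce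
  next
    case diag
    then show ?thesis
      using Mhat_cases diag_ext_in_align_mats[of A "i-1" "j-1"] diag_ext_zero_in_align_mats assms
      by fastforce
  qed
qed

lemma optimal_prefix_in_Mhat:
  assumes "A \<in> align_mats c d" "E ` align_mats c d \<subseteq> align_mats i j"
    and "\<And>B. Lcost a1 b1 a2 b2 i j (E B) z = Lcost a1 b1 a2 b2 c d B z + \<kappa>"
    and "Lhat a1 b1 a2 b2 i j z = Lcost a1 b1 a2 b2 i j (E A) z"
  shows "A \<in> Mhat a1 b1 a2 b2 c d"
proof -
  have "Lcost a1 b1 a2 b2 c d A z = Lhat a1 b1 a2 b2 c d z"
    unfolding Lhat_def
    by (rule Min_pullback_shift[where f = "\<lambda>M. Lcost a1 b1 a2 b2 i j M z"
          and g = "\<lambda>M. Lcost a1 b1 a2 b2 c d M z", OF finite_align_mats finite_align_mats assms(1,2)])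
      (use assms(3,4) in \<open>auto simp: Lhat_def\<close>)
  then show ?thesis
    using assms(1) align_mats_dims[OF assms(1)] unfolding Mhat_def by (auto intro!: exI[of _ z])
qed

lemma optimal_in_Mtilde:
  assumes "M \<in> align_mats i j" "Lhat a1 b1 a2 b2 i j z = Lcost a1 b1 a2 b2 i j M z"
  shows "M \<in> Mtilde a1 b1 a2 b2 i j"
  using assms(1)
proof (cases rule: align_mats_cases)
  case single
  then show ?thesis by (simp add: Mtilde_def Mhat_def)
next
  case (vert c A)
  have "1 \<le> j" using align_mats_dims assms(1) by blast
  then have "A \<in> Mhat a1 b1 a2 b2 c j"
    using vert assms(2) vstack_in_align_mats
    by (intro optimal_prefix_in_Mhat[where E = "\<lambda>B. vstack i j B (last_unit j)"])
      (auto simp: Lcost_eq_weighted_sum weighted_sum_vstack)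
  then show ?thesis using vert by (simp add: Mtilde_def)
next
  case (horiz d A)
  have "1 \<le> i" using align_mats_dims assms(1) by blast
  then have "A \<in> Mhat a1 b1 a2 b2 i d"
    using horiz assms(2) hstack_in_align_mats
    by (intro optimal_prefix_in_Mhat[where E = "\<lambda>B. hstack i j B (last_unit i)"])
      (auto simp: Lcost_eq_weighted_sum weighted_sum_hstack)
  then show ?thesis using horiz by (simp add: Mtilde_def)
next
  case (diag c d A)
  have "A \<in> Mhat a1 b1 a2 b2 c d"
    using diag assms(2) diag_ext_in_align_mats
    by (intro optimal_prefix_in_Mhat[where E = "diag_ext i j"])
      (auto simp: Lcost_eq_weighted_sum weighted_sum_diag_ext)
  then show ?thesis using diag by (simp add: Mtilde_def)
qed

theorem lemma2:
  fixes n m :: nat and a1 b1 a2 b2 :: "nat \<Rightarrow> real" and i j :: nat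
  assumes "1 \<le> n" and "1 \<le> m"
    and "1 \<le> i" and "i \<le> n" and "1 \<le> j" and "j \<le> m"
  shows "Mhat a1 b1 a2 b2 i j =
    {M \<in> Mtilde a1 b1 a2 b2 i j. \<exists>z::real.
       Lcost a1 b1 a2 b2 i j M z = Min ((\<lambda>M'. Lcost a1 b1 a2 b2 i j M' z) ` Mtilde a1 b1 a2 b2 i j)}"
proof -
  have "Mhat a1 b1 a2 b2 i j = {M \<in> align_mats i j. \<exists>z.
      Min ((\<lambda>M'. Lcost a1 b1 a2 b2 i j M' z) ` align_mats i j) = Lcost a1 b1 a2 b2 i j M z}"
    using assms by (simp add: Mhat_def Lhat_def)
  also have "\<dots> = {M \<in> Mtilde a1 b1 a2 b2 i j. \<exists>z::real.
       Lcost a1 b1 a2 b2 i j M z = Min ((\<lambda>M'. Lcost a1 b1 a2 b2 i j M' z) ` Mtilde a1 b1 a2 b2 i j)}"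
    using Mtilde_subset_align_mats[OF assms(3,5)] optimal_in_Mtilde
    by (intro minimizers_restrict_to_subset[where f = "\<lambda>z M. Lcost a1 b1 a2 b2 i j M z"]
        finite_align_mats) (auto simp: Lhat_def)
  finally show ?thesis .
qed

end
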